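(* Let $B_1,B_2$ be distributions on $\mathbb R$. (i) If $B_1\in\mathcal A^*$, $B_2\in\mathcal T^*$ and $\overline B_2(x)=O[\overline B_1(x)]$, then $\overline{B_1*B_2}(x)\sim\overline B_1(x)+\overline B_2(x)$ and $B_1*B_2\in\mathcal A^*$. (ii) If $B_1\in\mathcal A^*$ and $\overline B_2(x)=o[\overline B_1(x)]$, then $\overline{B_1*B_2}(x)\sim\overline B_1(x)$ and $B_1*B_2\in\mathcal A^*$.
   Context: All one-dimensional distributions have infinite right endpoint; $\overline B=1-B$; asymptotics as $x\to\infty$. $\mathcal L$: $\overline B(x-y)/\overline B(x)\to1$ for all $y>0$. $\mathcal S$: $B\in\mathcal L$ and $\overline{B^{2*}}(x)\sim2\overline B(x)$. $\overline{B^*}(v)=\limsup_x\overline B(vx)/\overline B(x)$, $K_B^-=-\lim_{v\downarrow1}\log\overline{B^*}(v)/\log v$. $\mathcal A^*=\{B\in\mathcal S:K_B^->0\}$, $\mathcal T^*=\{B\in\mathcal L:K_B^->0\}$. *)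

theory Defs
  imports "HOL-Probability.Probability" "HOL-Library.Landau_Symbols"
begin

definition real_distr :: "real measure \<Rightarrow> bool" where
  "real_distr B \<longleftrightarrow> prob_space B \<and> sets B = sets borel"

definition tail :: "real measure \<Rightarrow> real \<Rightarrow> real" where
  "tail B x = measure B {x<..}"

definition inf_right_endpoint :: "real measure \<Rightarrow> bool" where
  "inf_right_endpoint B \<longleftrightarrow> (\<forall>x. tail B x > 0)"

definition long_tailed :: "real measure \<Rightarrow> bool" where
  "long_tailed B \<longleftrightarrow> (\<forall>y>0. ((\<lambda>x. tail B (x - y) / tail B x) \<longlongrightarrow> 1) at_top)"

definition subexponential :: "real measure \<Rightarrow> bool" where
  "subexponential B \<longleftrightarrow> long_tailed B \<and>
     (\<lambda>x. tail (B \<star> B) x) \<sim>[at_top] (\<lambda>x. 2 * tail B x)"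

definition Bstar :: "real measure \<Rightarrow> real \<Rightarrow> ereal" where
  "Bstar B v = Limsup at_top (\<lambda>x. ereal (tail B (v * x) / tail B x))"

definition eln :: "ereal \<Rightarrow> ereal" where
  "eln z = (if z = \<infinity> then \<infinity> else if z \<le> 0 then - \<infinity> else ereal (ln (real_of_ereal z)))"

definition K_minus :: "real measure \<Rightarrow> ereal" where
  "K_minus B = - Lim (at_right (1::real)) (\<lambda>v. eln (Bstar B v) / ereal (ln v))"

definition A_star :: "real measure \<Rightarrow> bool" where
  "A_star B \<longleftrightarrow> subexponential B \<and> K_minus B > 0"

definition T_star :: "real measure \<Rightarrow> bool" where
  "T_star B \<longleftrightarrow> long_tailed B \<and> K_minus B > 0"

end

theory Submission
  imports Defs
begin

(*
  Split the event {X + Y > x} into {X > x - A}, {Y > x - A} and the corner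
  {X > A, Y > A, X + Y > x}.  Because B1 is subexponential, the corner mass of B1 \<star> B1
  is o(tail B1) as A grows, and for summands whose tails are O(tail B1) the corner mass is
  dominated by that of B1 \<star> B1.  Together with the lower bound from the rectangles
  {X > x + A, |Y| \<le> A} and {|X| \<le> A, Y > x + A}, long-tailedness of
  tail B1 + tail B2 gives tail (B1 \<star> B2) ~ tail B1 + tail B2; applying the same
  estimate to H \<star> H shows that H = B1 \<star> B2 is subexponential.

  For the index: tail H ~ tail B1 + tail B2 bounds overline{H^*}(v) by the larger of
  overline{B1^*}(v) and overline{B2^*}(v).  Since v \<mapsto> overline{B^*}(v) is
  submultiplicative, a Fekete-type argument shows that the limit defining K^-_B exists and
  equals - sup_{v > 1} log overline{B^*}(v) / log v, whence K^-_H \<ge> min K^-_B1 K^-_B2.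
*)

section \<open>Tails of convolutions\<close>

lemma real_distribution_if_real_distr: "real_distr B \<Longrightarrow> real_distribution B"
  by (simp add: real_distr_def real_distribution_def real_distribution_axioms_def)

lemma sets_pair_real_distr:
  assumes "real_distr P" "real_distr Q"
  shows "sets (P \<Otimes>\<^sub>M Q) = sets (borel :: (real \<times> real) measure)"
proof -
  interpret P: real_distribution P using assms(1) by (rule real_distribution_if_real_distr)
  interpret Q: real_distribution Q using assms(2) by (rule real_distribution_if_real_distr)
  have "sets (P \<Otimes>\<^sub>M Q) = sets (borel \<Otimes>\<^sub>M borel :: (real \<times> real) measure)"
    by (rule sets_pair_measure_cong) simp_all
  then show ?thesis by (simp only: borel_prod)
qed

lemma measurable_plus_pair_real_distr:
  assumes "real_distr P" "real_distr Q"
  shows "(\<lambda>(a, b). a + b) \<in> borel_measurable (P \<Otimes>\<^sub>M Q)"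
proof -
  have "(\<lambda>p::real \<times> real. fst p + snd p) \<in> borel_measurable borel"
    by (intro borel_measurable_continuous_onI continuous_intros)
  then show ?thesis
    by (simp add: measurable_cong_sets[OF sets_pair_real_distr[OF assms] refl] case_prod_beta')
qed

lemma real_distr_convolution:
  assumes "real_distr P" "real_distr Q"
  shows "real_distr (P \<star> Q)"
proof -
  interpret P: real_distribution P using assms(1) by (rule real_distribution_if_real_distr)
  interpret Q: real_distribution Q using assms(2) by (rule real_distribution_if_real_distr)
  interpret PQ: pair_prob_space P Q ..
  show ?thesis
    unfolding real_distr_def convolution_def
    using PQ.prob_space_distr[OF measurable_plus_pair_real_distr[OF assms]] by simp
qed

lemma tail_convolution:
  assumes "real_distr P" "real_distr Q"
  shows "tail (P \<star> Q) x = measure (P \<Otimes>\<^sub>M Q) {p. x < fst p + snd p}"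
proof -
  interpret P: real_distribution P using assms(1) by (rule real_distribution_if_real_distr)
  interpret Q: real_distribution Q using assms(2) by (rule real_distribution_if_real_distr)
  have "tail (P \<star> Q) x
      = measure (P \<Otimes>\<^sub>M Q) ((\<lambda>(a, b). a + b) -` {x<..} \<inter> space (P \<Otimes>\<^sub>M Q))"
    unfolding tail_def convolution_def
    by (rule measure_distr[OF measurable_plus_pair_real_distr[OF assms]]) simp
  also have "(\<lambda>(a, b). a + b) -` {x<..} \<inter> space (P \<Otimes>\<^sub>M Q) = {p. x < fst p + snd p}"
    by (auto simp: space_pair_measure)
  finally show ?thesis .
qed

lemma measure_pair_real_distr_Times:
  assumes "real_distr P" "real_distr Q" "X \<in> sets borel" "Y \<in> sets borel"
  shows "measure (P \<Otimes>\<^sub>M Q) (X \<times> Y) = measure P X * measure Q Y"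
proof -
  interpret P: real_distribution P using assms(1) by (rule real_distribution_if_real_distr)
  interpret Q: real_distribution Q using assms(2) by (rule real_distribution_if_real_distr)
  have "emeasure (P \<Otimes>\<^sub>M Q) (X \<times> Y) = emeasure P X * emeasure Q Y"
    using assms(3,4) by (intro Q.emeasure_pair_measure_Times) simp_all
  then show ?thesis
    by (simp add: measure_def enn2real_mult)
qed

lemma measure_symmetric_interval_tendsto:
  assumes "real_distr P"
  shows "((\<lambda>A. measure P {-A..A}) \<longlongrightarrow> 1) at_top"
proof -
  interpret real_distribution P using assms by (rule real_distribution_if_real_distr)
  have lower: "cdf P A - cdf P (-A) \<le> measure P {-A..A}" for A
  proof -
    have "cdf P A \<le> measure P ({..-A} \<union> {-A..A})"
      unfolding cdf_def by (rule finite_measure_mono) (auto simp del: ivl_disj_un)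
    also have "\<dots> \<le> cdf P (-A) + measure P {-A..A}"
      unfolding cdf_def by (intro measure_Un_le) auto
    finally show ?thesis by simp
  qed
  have lim: "((\<lambda>A. cdf P A - cdf P (-A)) \<longlongrightarrow> 1) at_top"
    using tendsto_diff[OF cdf_lim_at_top_prob
        filterlim_compose[OF cdf_lim_at_bot filterlim_uminus_at_bot_at_top]] by simp
  show ?thesis
    by (rule tendsto_sandwich[OF always_eventually always_eventually lim tendsto_const])
      (simp_all add: lower)
qed

lemma tail_nonneg: "0 \<le> tail B x"
  by (simp add: tail_def)

lemma tail_pos: "inf_right_endpoint B \<Longrightarrow> 0 < tail B x"
  by (simp add: inf_right_endpoint_def)

lemma tail_neq_zero: "inf_right_endpoint B \<Longrightarrow> tail B x \<noteq> 0"
  using tail_pos[of B x] by simp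

lemma tail_antimono:
  assumes "real_distr B" "x \<le> y"
  shows "tail B y \<le> tail B x"
proof -
  interpret real_distribution B using assms(1) by (rule real_distribution_if_real_distr)
  show ?thesis unfolding tail_def using assms(2) by (intro finite_measure_mono) auto
qed

definition joint_tail :: "real measure \<Rightarrow> real measure \<Rightarrow> real \<Rightarrow> real \<Rightarrow> real" where
  "joint_tail P Q A x = measure (P \<Otimes>\<^sub>M Q) {p. A < fst p \<and> A < snd p \<and> x < fst p + snd p}"

lemma joint_tail_nonneg: "0 \<le> joint_tail P Q A x"
  by (simp add: joint_tail_def)

lemma open_in_sets_pair_real_distr:
  assumes "real_distr P" "real_distr Q" "open S"
  shows "S \<in> sets (P \<Otimes>\<^sub>M Q)"
  unfolding sets_pair_real_distr[OF assms(1,2)] using assms(3) by simp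

lemma joint_tail_region_sets:
  assumes "real_distr P" "real_distr Q"
  shows "{p::real \<times> real. A < fst p \<and> A < snd p \<and> x < fst p + snd p} \<in> sets (P \<Otimes>\<^sub>M Q)"
  by (intro open_in_sets_pair_real_distr[OF assms] open_Collect_conj open_Collect_less
      continuous_intros)

lemma tail_convolution_le:
  assumes "real_distr P" "real_distr Q"
  shows "tail (P \<star> Q) x \<le> tail P (x - A) + tail Q (x - A) + joint_tail P Q A x"
proof -
  interpret P: real_distribution P using assms(1) by (rule real_distribution_if_real_distr)
  interpret Q: real_distribution Q using assms(2) by (rule real_distribution_if_real_distr)
  interpret PQ: pair_prob_space P Q ..
  define T1 where "T1 = {x - A<..} \<times> (UNIV :: real set)"
  define T2 where "T2 = (UNIV :: real set) \<times> {x - A<..}"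
  define S where "S = {p::real \<times> real. A < fst p \<and> A < snd p \<and> x < fst p + snd p}"
  have sets: "T1 \<in> sets (P \<Otimes>\<^sub>M Q)" "T2 \<in> sets (P \<Otimes>\<^sub>M Q)" "S \<in> sets (P \<Otimes>\<^sub>M Q)"
    unfolding T1_def T2_def S_def using joint_tail_region_sets[OF assms] by auto
  have "tail (P \<star> Q) x \<le> measure (P \<Otimes>\<^sub>M Q) (T1 \<union> T2 \<union> S)"
    unfolding tail_convolution[OF assms] using sets
    by (intro PQ.finite_measure_mono) (auto simp: T1_def T2_def S_def)
  also have "\<dots> \<le> measure (P \<Otimes>\<^sub>M Q) T1 + measure (P \<Otimes>\<^sub>M Q) T2 + measure (P \<Otimes>\<^sub>M Q) S"
    using sets by (intro order.trans[OF measure_Un_le] add_right_mono measure_Un_le) auto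
  also have "measure (P \<Otimes>\<^sub>M Q) T1 = tail P (x - A)"
    unfolding T1_def using measure_pair_real_distr_Times[OF assms, of "{x - A<..}" UNIV]
    by (simp add: tail_def Q.prob_space[unfolded Q.space_eq_univ])
  also have "measure (P \<Otimes>\<^sub>M Q) T2 = tail Q (x - A)"
    unfolding T2_def using measure_pair_real_distr_Times[OF assms, of UNIV "{x - A<..}"]
    by (simp add: tail_def P.prob_space[unfolded P.space_eq_univ])
  finally show ?thesis unfolding joint_tail_def S_def .
qed

lemma tail_convolution_ge:
  assumes "real_distr P" "real_distr Q" "0 \<le> x"
  shows "tail P (x + A) * measure Q {-A..A} + measure P {-A..A} * tail Q (x + A)
           + joint_tail P Q A x \<le> tail (P \<star> Q) x"
proof -
  interpret P: real_distribution P using assms(1) by (rule real_distribution_if_real_distr)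
  interpret Q: real_distribution Q using assms(2) by (rule real_distribution_if_real_distr)
  interpret PQ: pair_prob_space P Q ..
  define R1 where "R1 = {x + A<..} \<times> {-A..A}"
  define R2 where "R2 = {-A..A} \<times> {x + A<..}"
  define S where "S = {p::real \<times> real. A < fst p \<and> A < snd p \<and> x < fst p + snd p}"
  have sets: "R1 \<in> sets (P \<Otimes>\<^sub>M Q)" "R2 \<in> sets (P \<Otimes>\<^sub>M Q)" "S \<in> sets (P \<Otimes>\<^sub>M Q)"
    unfolding R1_def R2_def S_def using joint_tail_region_sets[OF assms(1,2)] by auto
  have sum_gt: "{p::real \<times> real. x < fst p + snd p} \<in> sets (P \<Otimes>\<^sub>M Q)"
    by (intro open_in_sets_pair_real_distr[OF assms(1,2)] open_Collect_less continuous_intros)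
  have disjoint: "R1 \<inter> R2 = {}" "(R1 \<union> R2) \<inter> S = {}"
    unfolding R1_def R2_def S_def using assms(3) by auto
  have "measure (P \<Otimes>\<^sub>M Q) R1 + measure (P \<Otimes>\<^sub>M Q) R2 + measure (P \<Otimes>\<^sub>M Q) S
      = measure (P \<Otimes>\<^sub>M Q) (R1 \<union> R2 \<union> S)"
    using sets disjoint by (simp add: PQ.finite_measure_Union)
  also have "\<dots> \<le> tail (P \<star> Q) x"
    unfolding tail_convolution[OF assms(1,2)] using sum_gt
    by (rule PQ.finite_measure_mono[rotated]) (auto simp: R1_def R2_def S_def)
  also have "measure (P \<Otimes>\<^sub>M Q) R1 = tail P (x + A) * measure Q {-A..A}"
    unfolding R1_def tail_def by (simp add: measure_pair_real_distr_Times[OF assms(1,2)])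
  also have "measure (P \<Otimes>\<^sub>M Q) R2 = measure P {-A..A} * tail Q (x + A)"
    unfolding R2_def tail_def by (simp add: measure_pair_real_distr_Times[OF assms(1,2)])
  finally show ?thesis unfolding joint_tail_def S_def .
qed

lemma inf_right_endpoint_convolution:
  assumes "real_distr P" "real_distr Q" "inf_right_endpoint P"
  shows "inf_right_endpoint (P \<star> Q)"
proof -
  have "eventually (\<lambda>A. 0 < measure Q {-A..A}) at_top"
    by (intro order_tendstoD(1)[OF measure_symmetric_interval_tendsto[OF assms(2)]]) simp
  then obtain A where A: "0 < measure Q {-A..A}"
    using eventually_happens'[OF trivial_limit_at_top_linorder] by blast
  have pos: "0 < tail (P \<star> Q) x" if "0 \<le> x" for x
  proof -
    have "0 < tail P (x + A) * measure Q {-A..A}"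
      using A tail_pos[OF assms(3)] by simp
    also have "\<dots> \<le> tail P (x + A) * measure Q {-A..A} + measure P {-A..A} * tail Q (x + A)
        + joint_tail P Q A x"
      by (simp add: joint_tail_nonneg tail_nonneg)
    also have "\<dots> \<le> tail (P \<star> Q) x"
      using that by (rule tail_convolution_ge[OF assms(1,2)])
    finally show ?thesis .
  qed
  show ?thesis
    unfolding inf_right_endpoint_def
  proof
    fix x :: real
    have "0 < tail (P \<star> Q) (max x 0)" by (rule pos) simp
    also have "\<dots> \<le> tail (P \<star> Q) x"
      by (intro tail_antimono real_distr_convolution assms(1,2)) simp
    finally show "0 < tail (P \<star> Q) x" .
  qed
qed

lemma joint_tail_commute:
  assumes "real_distr P" "real_distr Q"
  shows "joint_tail P Q A x = joint_tail Q P A x"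
proof -
  interpret P: real_distribution P using assms(1) by (rule real_distribution_if_real_distr)
  interpret Q: real_distribution Q using assms(2) by (rule real_distribution_if_real_distr)
  interpret QP: pair_sigma_finite Q P ..
  define S where "S = {p::real \<times> real. A < fst p \<and> A < snd p \<and> x < fst p + snd p}"
  have "measure (Q \<Otimes>\<^sub>M P) S
      = measure (P \<Otimes>\<^sub>M Q) ((\<lambda>(a, b). (b, a)) -` S \<inter> space (P \<Otimes>\<^sub>M Q))"
    using joint_tail_region_sets[OF assms(2,1)] unfolding S_def
    by (subst QP.distr_pair_swap) (intro measure_distr measurable_pair_swap')
  also have "(\<lambda>(a, b). (b, a)) -` S \<inter> space (P \<Otimes>\<^sub>M Q) = S"
    by (auto simp: S_def space_pair_measure)
  finally show ?thesis unfolding joint_tail_def S_def ..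
qed

lemma joint_tail_le_left:
  assumes "real_distr P" "real_distr Q" "real_distr F" "0 \<le> c"
    and dom: "\<forall>t\<ge>A. tail P t \<le> c * tail F t"
  shows "joint_tail P Q A x \<le> c * joint_tail F Q A x"
proof -
  interpret P: real_distribution P using assms(1) by (rule real_distribution_if_real_distr)
  interpret Q: real_distribution Q using assms(2) by (rule real_distribution_if_real_distr)
  interpret F: real_distribution F using assms(3) by (rule real_distribution_if_real_distr)
  interpret PQ: pair_prob_space P Q ..
  interpret FQ: pair_prob_space F Q ..
  define S where "S = {p::real \<times> real. A < fst p \<and> A < snd p \<and> x < fst p + snd p}"
  have S: "S \<in> sets (P \<Otimes>\<^sub>M Q)" "S \<in> sets (F \<Otimes>\<^sub>M Q)"
    unfolding S_def using joint_tail_region_sets assms by blast+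
  have slice: "emeasure P ((\<lambda>a. (a, b)) -` S) \<le> ennreal c * emeasure F ((\<lambda>a. (a, b)) -` S)"
    for b
  proof (cases "A < b")
    case True
    then have slice_eq: "(\<lambda>a. (a, b)) -` S = {max A (x - b)<..}" by (auto simp: S_def)
    have "tail P (max A (x - b)) \<le> c * tail F (max A (x - b))" using dom by simp
    then have "ennreal (tail P (max A (x - b))) \<le> ennreal c * ennreal (tail F (max A (x - b)))"
      using assms(4) by (metis ennreal_leI ennreal_mult')
    then show ?thesis
      unfolding slice_eq tail_def by (simp add: P.emeasure_eq_measure F.emeasure_eq_measure)
  qed (simp add: S_def)
  have "emeasure (P \<Otimes>\<^sub>M Q) S = (\<integral>\<^sup>+b. emeasure P ((\<lambda>a. (a, b)) -` S) \<partial>Q)"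
    by (rule PQ.emeasure_pair_measure_alt2[OF S(1)])
  also have "\<dots> \<le> (\<integral>\<^sup>+b. ennreal c * emeasure F ((\<lambda>a. (a, b)) -` S) \<partial>Q)"
    by (intro nn_integral_mono slice)
  also have "\<dots> = ennreal c * (\<integral>\<^sup>+b. emeasure F ((\<lambda>a. (a, b)) -` S) \<partial>Q)"
    by (rule nn_integral_cmult[OF FQ.measurable_emeasure_Pair2[OF S(2)]])
  also have "\<dots> = ennreal c * emeasure (F \<Otimes>\<^sub>M Q) S"
    by (simp only: FQ.emeasure_pair_measure_alt2[OF S(2)])
  finally have "ennreal (measure (P \<Otimes>\<^sub>M Q) S) \<le> ennreal (c * measure (F \<Otimes>\<^sub>M Q) S)"
    by (simp only: PQ.emeasure_eq_measure FQ.emeasure_eq_measure ennreal_mult'[OF assms(4)])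
  then show ?thesis
    unfolding joint_tail_def S_def[symmetric] using assms(4) by (subst (asm) ennreal_le_iff) auto
qed

lemma joint_tail_le:
  assumes "real_distr P" "real_distr Q" "real_distr F" "0 \<le> c1" "0 \<le> c2"
    and "\<forall>t\<ge>A. tail P t \<le> c1 * tail F t" "\<forall>t\<ge>A. tail Q t \<le> c2 * tail F t"
  shows "joint_tail P Q A x \<le> c1 * c2 * joint_tail F F A x"
proof -
  have "joint_tail F Q A x = joint_tail Q F A x"
    using assms(3,2) by (rule joint_tail_commute)
  also have "\<dots> \<le> c2 * joint_tail F F A x"
    using assms(2,3,3,5,7) by (rule joint_tail_le_left)
  finally have FQ: "joint_tail F Q A x \<le> c2 * joint_tail F F A x" .
  have "joint_tail P Q A x \<le> c1 * joint_tail F Q A x"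
    using assms(1-4,6) by (rule joint_tail_le_left)
  also have "\<dots> \<le> c1 * (c2 * joint_tail F F A x)"
    using FQ assms(4) by (rule mult_left_mono)
  finally show ?thesis by (simp add: mult.assoc)
qed

section \<open>Long-tailed functions\<close>

lemma asymp_equiv_iff_ratio_tendsto:
  assumes "\<And>x. g x \<noteq> 0"
  shows "f \<sim>[F] g \<longleftrightarrow> ((\<lambda>x. f x / g x) \<longlongrightarrow> 1) F"
proof
  show "((\<lambda>x. f x / g x) \<longlongrightarrow> 1) F" if "f \<sim>[F] g"
    using that assms by (intro asymp_equivD_strong always_eventually) auto
qed (rule asymp_equivI')

definition long_tailed_fun :: "(real \<Rightarrow> real) \<Rightarrow> bool" where
  "long_tailed_fun f \<longleftrightarrow> (\<forall>y. (\<lambda>x. f (x + y)) \<sim>[at_top] f)"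

lemma filterlim_plus_const_at_top: "filterlim (\<lambda>x::real. x + y) at_top at_top"
  using filterlim_tendsto_add_at_top[OF tendsto_const filterlim_ident, of y]
  by (simp add: add.commute)

lemma long_tailed_iff_fun:
  assumes "inf_right_endpoint B"
  shows "long_tailed B \<longleftrightarrow> long_tailed_fun (tail B)"
proof -
  note ratio_iff = asymp_equiv_iff_ratio_tendsto[OF tail_neq_zero[OF assms]]
  have "(\<lambda>x. tail B (x + y)) \<sim>[at_top] tail B" if "long_tailed B" for y
  proof (cases y "0::real" rule: linorder_cases)
    case less
    then show ?thesis
      using that[unfolded long_tailed_def, rule_format, of "-y"] unfolding ratio_iff by simp
  next
    case greater
    then have "(\<lambda>x. tail B (x + (-y))) \<sim>[at_top] tail B"
      using that[unfolded long_tailed_def, rule_format, of y] unfolding ratio_iff by simp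
    then have "(\<lambda>x. tail B (x + y + (-y))) \<sim>[at_top] (\<lambda>x. tail B (x + y))"
      by (rule asymp_equiv_compose'[OF _ filterlim_plus_const_at_top])
    then show ?thesis by (simp add: asymp_equiv_sym)
  qed simp
  moreover have "long_tailed B" if "long_tailed_fun (tail B)"
    unfolding long_tailed_def
  proof safe
    fix y :: real
    from that have "(\<lambda>x. tail B (x + (-y))) \<sim>[at_top] tail B"
      unfolding long_tailed_fun_def by blast
    then show "((\<lambda>x. tail B (x - y) / tail B x) \<longlongrightarrow> 1) at_top"
      unfolding ratio_iff by simp
  qed
  ultimately show ?thesis unfolding long_tailed_fun_def by blast
qed

lemma long_tailed_fun_asymp_equiv:
  assumes "f \<sim>[at_top] g" "long_tailed_fun g"
  shows "long_tailed_fun f"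
  unfolding long_tailed_fun_def
proof
  fix y
  have "(\<lambda>x. f (x + y)) \<sim>[at_top] (\<lambda>x. g (x + y))"
    by (rule asymp_equiv_compose'[OF assms(1) filterlim_plus_const_at_top])
  also have "(\<lambda>x. g (x + y)) \<sim>[at_top] g"
    using assms(2) unfolding long_tailed_fun_def by blast
  also have "g \<sim>[at_top] f"
    using assms(1) by (simp add: asymp_equiv_sym)
  finally show "(\<lambda>x. f (x + y)) \<sim>[at_top] f" .
qed

lemma long_tailed_fun_add:
  assumes "long_tailed_fun f" "long_tailed_fun g" "\<And>x. 0 \<le> f x" "\<And>x. 0 \<le> g x"
  shows "long_tailed_fun (\<lambda>x. f x + g x)"
  unfolding long_tailed_fun_def asymp_equiv_altdef
proof
  fix y
  have f_big: "f \<in> O[at_top](\<lambda>x. f x + g x)" and g_big: "g \<in> O[at_top](\<lambda>x. f x + g x)"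
    using assms(3,4) by (intro bigoI[of _ 1] always_eventually allI; simp)+
  have f_shift: "(\<lambda>x. f (x + y) - f x) \<in> o[at_top](f)"
    and g_shift: "(\<lambda>x. g (x + y) - g x) \<in> o[at_top](g)"
    using assms(1,2) unfolding long_tailed_fun_def asymp_equiv_altdef by blast+
  have "(\<lambda>x. (f (x + y) - f x) + (g (x + y) - g x)) \<in> o[at_top](\<lambda>x. f x + g x)"
    using sum_in_smallo(1)[OF landau_o.small_big_trans[OF f_shift f_big]
        landau_o.small_big_trans[OF g_shift g_big]] .
  then show "(\<lambda>x. f (x + y) + g (x + y) - (f x + g x)) \<in> o[at_top](\<lambda>x. f x + g x)"
    by (simp add: algebra_simps)
qed

section \<open>Convolution with a subexponential distribution\<close>

lemma bigo_at_top_nonnegE: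
  fixes f g :: "real \<Rightarrow> real"
  assumes "f \<in> O[at_top](g)" "\<And>x. 0 \<le> f x" "\<And>x. 0 \<le> g x"
  obtains c T where "0 < c" "\<And>t. T \<le> t \<Longrightarrow> f t \<le> c * g t"
proof -
  obtain c where "0 < c" "eventually (\<lambda>x. norm (f x) \<le> c * norm (g x)) at_top"
    using assms(1) by (rule landau_o.bigE)
  then show ?thesis
    using assms(2,3) that by (auto simp: eventually_at_top_linorder)
qed

lemma subexponential_ratio_tendsto:
  assumes "inf_right_endpoint F" "subexponential F"
  shows "((\<lambda>x. tail (F \<star> F) x / tail F x) \<longlongrightarrow> 2) at_top"
proof -
  have "(\<lambda>x. tail (F \<star> F) x / tail F x) \<sim>[at_top] (\<lambda>x. 2 * tail F x / tail F x)"
    using assms(2) unfolding subexponential_def by (intro asymp_equiv_divide) simp_all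
  moreover have "(\<lambda>x. 2 * tail F x / tail F x) = (\<lambda>_. 2)"
    using tail_neq_zero[OF assms(1)] by simp
  ultimately show ?thesis by (simp add: tendsto_asymp_equiv_cong)
qed

lemma joint_tail_negligible:
  assumes F: "real_distr F" "inf_right_endpoint F" "subexponential F" and "0 < \<epsilon>"
  shows "eventually (\<lambda>A. eventually (\<lambda>x. joint_tail F F A x \<le> \<epsilon> * tail F x) at_top) at_top"
proof -
  have "long_tailed_fun (tail F)"
    using F(3) long_tailed_iff_fun[OF F(2)] by (simp add: subexponential_def)
  then have shift: "((\<lambda>x. tail F (x + A) / tail F x) \<longlongrightarrow> 1) at_top" for A
    unfolding long_tailed_fun_def asymp_equiv_iff_ratio_tendsto[OF tail_neq_zero[OF F(2)]] by blast
  have "((\<lambda>A. 2 - 2 * measure F {-A..A}) \<longlongrightarrow> 2 - 2 * 1) at_top"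
    by (intro tendsto_intros measure_symmetric_interval_tendsto F(1))
  then have "eventually (\<lambda>A. 2 - 2 * measure F {-A..A} < \<epsilon>) at_top"
    using \<open>0 < \<epsilon>\<close> by (intro order_tendstoD) simp_all
  then show ?thesis
  proof eventually_elim
    case (elim A)
    \<comment> \<open>The lower bound for \<open>F \<star> F\<close> leaves at most \<open>(2 - 2 p + o(1)) tail F x\<close>
      for the corner.\<close>
    define p where "p = measure F {-A..A}"
    have "((\<lambda>x. tail (F \<star> F) x / tail F x - 2 * p * (tail F (x + A) / tail F x))
        \<longlongrightarrow> 2 - 2 * p * 1) at_top"
      by (intro tendsto_intros subexponential_ratio_tendsto F(2,3) shift)
    then have "eventually (\<lambda>x.
        tail (F \<star> F) x / tail F x - 2 * p * (tail F (x + A) / tail F x) < \<epsilon>) at_top"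
      using elim unfolding p_def by (intro order_tendstoD) simp_all
    then show ?case
      using eventually_ge_at_top[of 0]
    proof eventually_elim
      case (elim x)
      have "joint_tail F F A x \<le> tail (F \<star> F) x - 2 * p * tail F (x + A)"
        using tail_convolution_ge[OF F(1) F(1) elim(2), of A] unfolding p_def
        by (simp add: algebra_simps)
      also have "\<dots> = (tail (F \<star> F) x / tail F x - 2 * p * (tail F (x + A) / tail F x)) * tail F x"
        using tail_neq_zero[OF F(2), of x] by (simp add: field_simps)
      also have "\<dots> \<le> \<epsilon> * tail F x"
        using elim(1) tail_nonneg[of F x] by (intro mult_right_mono) simp_all
      finally show ?case .
    qed
  qed
qed

lemma tail_convolution_lower:
  assumes "real_distr P" "real_distr Q" "long_tailed_fun (\<lambda>x. tail P x + tail Q x)" "0 < \<eta>"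
  shows "eventually (\<lambda>x. (1 - \<eta>) * (tail P x + tail Q x) \<le> tail (P \<star> Q) x) at_top"
proof -
  define \<delta> where "\<delta> = min (\<eta> / 2) (1 / 2)"
  have \<delta>: "0 < \<delta>" "\<delta> < 1" "1 - \<eta> \<le> (1 - \<delta>) * (1 - \<delta>)"
    using assms(4) by (auto simp: \<delta>_def min_def algebra_simps)
  have "eventually (\<lambda>A. 1 - \<delta> < measure P {-A..A} \<and> 1 - \<delta> < measure Q {-A..A}) at_top"
    using \<delta> by (intro eventually_conj order_tendstoD(1)[OF measure_symmetric_interval_tendsto]
        assms) simp_all
  then obtain A where A: "1 - \<delta> < measure P {-A..A}" "1 - \<delta> < measure Q {-A..A}"
    using eventually_happens'[OF trivial_limit_at_top_linorder] by blast
  have "eventually (\<lambda>x. norm (tail P (x + A) + tail Q (x + A))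
      \<ge> (1 - \<delta>) * norm (tail P x + tail Q x)) at_top"
    using assms(3) \<delta>(1) unfolding long_tailed_fun_def by (intro asymp_equiv_imp_eventually_ge) auto
  then show ?thesis
    using eventually_ge_at_top[of 0]
  proof eventually_elim
    case (elim x)
    have nonneg: "0 \<le> tail P x + tail Q x" "0 \<le> tail P (x + A)" "0 \<le> tail Q (x + A)"
      by (simp_all add: add_nonneg_nonneg tail_nonneg)
    have "(1 - \<eta>) * (tail P x + tail Q x) \<le> (1 - \<delta>) * ((1 - \<delta>) * (tail P x + tail Q x))"
      using \<delta>(3) nonneg(1) by (simp add: mult.assoc[symmetric] mult_right_mono)
    also have "\<dots> \<le> (1 - \<delta>) * (tail P (x + A) + tail Q (x + A))"
      using elim(1) \<delta>(2) nonneg by (intro mult_left_mono) simp_all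
    also have "\<dots> \<le> measure Q {-A..A} * tail P (x + A) + measure P {-A..A} * tail Q (x + A)"
      unfolding distrib_left using A nonneg by (intro add_mono mult_right_mono) simp_all
    also have "\<dots> \<le> tail (P \<star> Q) x"
      using tail_convolution_ge[OF assms(1,2) elim(2), of A] joint_tail_nonneg[of P Q A x]
      by (simp add: mult.commute)
    finally show ?case .
  qed
qed

lemma joint_tail_negligible_dominated:
  assumes F: "real_distr F" "inf_right_endpoint F" "subexponential F"
    and PQ: "real_distr P" "real_distr Q"
    and dom: "tail P \<in> O[at_top](tail F)" "tail Q \<in> O[at_top](tail F)"
      "tail F \<in> O[at_top](\<lambda>x. tail P x + tail Q x)"
    and "0 < \<eta>"
  shows "eventually (\<lambda>A. eventually (\<lambda>x.
           joint_tail P Q A x \<le> \<eta> * (tail P x + tail Q x)) at_top) at_top"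
proof -
  obtain c1 T1 where c1: "0 < c1" "\<And>t. T1 \<le> t \<Longrightarrow> tail P t \<le> c1 * tail F t"
    using bigo_at_top_nonnegE[OF dom(1) tail_nonneg tail_nonneg] by blast
  obtain c2 T2 where c2: "0 < c2" "\<And>t. T2 \<le> t \<Longrightarrow> tail Q t \<le> c2 * tail F t"
    using bigo_at_top_nonnegE[OF dom(2) tail_nonneg tail_nonneg] by blast
  obtain d T3 where d: "0 < d" "\<And>t. T3 \<le> t \<Longrightarrow> tail F t \<le> d * (tail P t + tail Q t)"
    using bigo_at_top_nonnegE[OF dom(3) tail_nonneg add_nonneg_nonneg[OF tail_nonneg tail_nonneg]]
    by blast
  define \<epsilon> where "\<epsilon> = \<eta> / (c1 * c2 * d)"
  have \<epsilon>: "0 < \<epsilon>" "c1 * c2 * (\<epsilon> * d) = \<eta>"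
    using c1(1) c2(1) d(1) \<open>0 < \<eta>\<close> by (simp_all add: \<epsilon>_def)
  show ?thesis
    using eventually_ge_at_top[of "max T1 T2"] joint_tail_negligible[OF F \<epsilon>(1)]
  proof eventually_elim
    case (elim A)
    note A = elim
    show ?case
      using A(2) eventually_ge_at_top[of T3]
    proof eventually_elim
      case (elim x)
      have "joint_tail P Q A x \<le> c1 * c2 * joint_tail F F A x"
        using A(1) c1 c2 by (intro joint_tail_le PQ F(1)) auto
      also have "\<dots> \<le> c1 * c2 * (\<epsilon> * (d * (tail P x + tail Q x)))"
        using d(2)[OF elim(2)] c1(1) c2(1) \<epsilon>(1)
        by (intro mult_left_mono order.trans[OF elim(1)]) simp_all
      also have "\<dots> = c1 * c2 * (\<epsilon> * d) * (tail P x + tail Q x)"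
        by (simp add: algebra_simps)
      finally show ?case
        by (simp only: \<epsilon>(2))
    qed
  qed
qed

lemma tail_convolution_upper:
  assumes F: "real_distr F" "inf_right_endpoint F" "subexponential F"
    and PQ: "real_distr P" "real_distr Q"
    and dom: "tail P \<in> O[at_top](tail F)" "tail Q \<in> O[at_top](tail F)"
      "tail F \<in> O[at_top](\<lambda>x. tail P x + tail Q x)"
    and lt: "long_tailed_fun (\<lambda>x. tail P x + tail Q x)" and "0 < \<eta>"
  shows "eventually (\<lambda>x. tail (P \<star> Q) x \<le> (1 + \<eta>) * (tail P x + tail Q x)) at_top"
proof -
  have "eventually (\<lambda>A. eventually (\<lambda>x.
      joint_tail P Q A x \<le> \<eta> / 2 * (tail P x + tail Q x)) at_top) at_top"
    using \<open>0 < \<eta>\<close> by (intro joint_tail_negligible_dominated[OF F PQ dom]) simp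
  then obtain A where A: "eventually (\<lambda>x. joint_tail P Q A x \<le> \<eta> / 2 * (tail P x + tail Q x)) at_top"
    using eventually_happens'[OF trivial_limit_at_top_linorder] by blast
  have "(\<lambda>x. tail P (x + - A) + tail Q (x + - A)) \<sim>[at_top] (\<lambda>x. tail P x + tail Q x)"
    using lt unfolding long_tailed_fun_def by blast
  from asymp_equiv_imp_eventually_le[OF this, of "1 + \<eta> / 2"]
  have "eventually (\<lambda>x. norm (tail P (x - A) + tail Q (x - A))
      \<le> (1 + \<eta> / 2) * norm (tail P x + tail Q x)) at_top"
    using \<open>0 < \<eta>\<close> by simp
  then show ?thesis
    using A
  proof eventually_elim
    case (elim x)
    have "tail (P \<star> Q) x \<le> tail P (x - A) + tail Q (x - A) + joint_tail P Q A x"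
      by (rule tail_convolution_le[OF PQ])
    moreover have "tail P (x - A) + tail Q (x - A) \<le> (1 + \<eta> / 2) * (tail P x + tail Q x)"
      using elim(1) by (simp add: add_nonneg_nonneg tail_nonneg)
    ultimately show ?case
      using elim(2) by (simp add: algebra_simps)
  qed
qed

lemma tail_convolution_asymp_equiv:
  assumes "real_distr F" "inf_right_endpoint F" "subexponential F"
    and "real_distr P" "real_distr Q"
    and "tail P \<in> O[at_top](tail F)" "tail Q \<in> O[at_top](tail F)"
      "tail F \<in> O[at_top](\<lambda>x. tail P x + tail Q x)"
    and "long_tailed_fun (\<lambda>x. tail P x + tail Q x)"
  shows "(\<lambda>x. tail (P \<star> Q) x) \<sim>[at_top] (\<lambda>x. tail P x + tail Q x)"
  unfolding asymp_equiv_altdef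
proof (rule landau_o.smallI)
  fix \<eta> :: real
  assume "0 < \<eta>"
  show "eventually (\<lambda>x. norm (tail (P \<star> Q) x - (tail P x + tail Q x))
      \<le> \<eta> * norm (tail P x + tail Q x)) at_top"
    using tail_convolution_lower[OF assms(4,5,9) \<open>0 < \<eta>\<close>]
      tail_convolution_upper[OF assms \<open>0 < \<eta>\<close>]
    by eventually_elim (simp add: abs_le_iff add_nonneg_nonneg tail_nonneg algebra_simps)
qed

lemma subexponential_if_bigtheta:
  assumes F: "real_distr F" "inf_right_endpoint F" "subexponential F"
    and H: "real_distr H" "inf_right_endpoint H" "long_tailed H"
    and theta: "tail H \<in> \<Theta>[at_top](tail F)"
  shows "subexponential H"
proof -
  have "long_tailed_fun (tail H)"
    using H(3) long_tailed_iff_fun[OF H(2)] by simp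
  then have lt: "long_tailed_fun (\<lambda>x. tail H x + tail H x)"
    by (intro long_tailed_fun_add tail_nonneg)
  have H_big: "tail H \<in> O[at_top](tail F)"
    using theta by blast
  have double: "(\<lambda>x. tail H x + tail H x) = (\<lambda>x. 2 * tail H x)"
    by (simp add: fun_eq_iff)
  have "tail F \<in> O[at_top](tail H)"
    using theta by (simp add: bigtheta_sym[of "tail H"] bigthetaD1)
  then have F_big: "tail F \<in> O[at_top](\<lambda>x. tail H x + tail H x)"
    unfolding double by simp
  have "(\<lambda>x. tail (H \<star> H) x) \<sim>[at_top] (\<lambda>x. tail H x + tail H x)"
    by (rule tail_convolution_asymp_equiv[OF F H(1) H(1) H_big H_big F_big lt])
  then show ?thesis
    using H(3) unfolding double subexponential_def by simp
qed

lemma convolution_subexponential: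
  assumes F: "real_distr F" "inf_right_endpoint F" "subexponential F"
    and G: "real_distr G" "tail G \<in> O[at_top](tail F)"
    and lt: "long_tailed_fun (\<lambda>x. tail F x + tail G x)"
  shows "(\<lambda>x. tail (F \<star> G) x) \<sim>[at_top] (\<lambda>x. tail F x + tail G x)"
    and "subexponential (F \<star> G)"
proof -
  have F_big: "tail F \<in> O[at_top](\<lambda>x. tail F x + tail G x)"
    by (intro bigoI[of _ 1] always_eventually allI) (simp add: tail_nonneg)
  show equiv: "(\<lambda>x. tail (F \<star> G) x) \<sim>[at_top] (\<lambda>x. tail F x + tail G x)"
    by (rule tail_convolution_asymp_equiv[OF F F(1) G(1) landau_o.big_refl G(2) F_big lt])
  have H: "real_distr (F \<star> G)" "inf_right_endpoint (F \<star> G)"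
    using F G by (simp_all add: real_distr_convolution inf_right_endpoint_convolution)
  have "long_tailed_fun (tail (F \<star> G))"
    using long_tailed_fun_asymp_equiv[OF equiv lt] by simp
  then have "long_tailed (F \<star> G)"
    using long_tailed_iff_fun[OF H(2)] by simp
  moreover have "(\<lambda>x. tail F x + tail G x) \<in> \<Theta>[at_top](tail F)"
    using sum_in_bigo(1)[OF landau_o.big_refl G(2)] F_big by (simp add: bigthetaI bigomega_iff_bigo)
  then have "tail (F \<star> G) \<in> \<Theta>[at_top](tail F)"
    using landau_theta.trans[OF asymp_equiv_imp_bigtheta[OF equiv]] by simp
  ultimately show "subexponential (F \<star> G)"
    by (rule subexponential_if_bigtheta[OF F H])
qed

section \<open>The index \<open>K\<^sup>-\<close>\<close>

definition Bstar_real :: "real measure \<Rightarrow> real \<Rightarrow> real" where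
  "Bstar_real B v = real_of_ereal (Bstar B v)"

lemma tail_ratio_bounds:
  assumes "real_distr B" "inf_right_endpoint B" "1 \<le> v" "0 < x"
  shows "0 \<le> tail B (v * x) / tail B x" "tail B (v * x) / tail B x \<le> 1"
proof -
  have "tail B (v * x) \<le> tail B x"
    using assms by (intro tail_antimono) (auto simp: mult_le_cancel_right1)
  then show "0 \<le> tail B (v * x) / tail B x" "tail B (v * x) / tail B x \<le> 1"
    using tail_pos[OF assms(2), of x] tail_nonneg[of B "v * x"] by auto
qed

lemma Bstar_bounds:
  assumes "real_distr B" "inf_right_endpoint B" "1 \<le> v"
  shows "0 \<le> Bstar B v" "Bstar B v \<le> 1"
proof -
  let ?r = "\<lambda>x. ereal (tail B (v * x) / tail B x)"
  have "eventually (\<lambda>x. ?r x \<le> 1) at_top" "eventually (\<lambda>x. 0 \<le> ?r x) at_top"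
    using eventually_gt_at_top[of 0] by (eventually_elim; simp add: tail_ratio_bounds[OF assms])+
  then have "Bstar B v \<le> 1" "0 \<le> Liminf at_top ?r"
    unfolding Bstar_def by (auto intro: Limsup_bounded Liminf_bounded)
  moreover have "Liminf at_top ?r \<le> Bstar B v"
    unfolding Bstar_def by (rule Liminf_le_Limsup) simp
  ultimately show "0 \<le> Bstar B v" "Bstar B v \<le> 1" by auto
qed

lemma Bstar_eq_ereal:
  assumes "real_distr B" "inf_right_endpoint B" "1 \<le> v"
  shows "Bstar B v = ereal (Bstar_real B v)"
  using Bstar_bounds[OF assms] unfolding Bstar_real_def by (cases "Bstar B v") simp_all

lemma Bstar_real_bounds:
  assumes "real_distr B" "inf_right_endpoint B" "1 \<le> v"
  shows "0 \<le> Bstar_real B v" "Bstar_real B v \<le> 1"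
  using Bstar_bounds[OF assms] unfolding Bstar_eq_ereal[OF assms] by simp_all

lemma eventually_tail_ratio_less:
  assumes "real_distr B" "inf_right_endpoint B" "1 \<le> v" "Bstar_real B v < a"
  shows "eventually (\<lambda>x. tail B (v * x) / tail B x < a) at_top"
proof -
  have "Limsup at_top (\<lambda>x. ereal (tail B (v * x) / tail B x)) < ereal a"
    using Bstar_eq_ereal[OF assms(1-3)] assms(4) by (simp add: Bstar_def)
  from Limsup_lessD[OF this] show ?thesis by simp
qed

lemma Bstar_real_le:
  assumes "real_distr B" "inf_right_endpoint B" "1 \<le> v"
    and "eventually (\<lambda>x. tail B (v * x) / tail B x \<le> a) at_top"
  shows "Bstar_real B v \<le> a"
proof -
  have "Bstar B v \<le> ereal a"
    unfolding Bstar_def using assms(4) by (intro Limsup_bounded) simp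
  then show ?thesis using Bstar_eq_ereal[OF assms(1-3)] by simp
qed

lemma Bstar_real_one:
  assumes "inf_right_endpoint B"
  shows "Bstar_real B 1 = 1"
proof -
  have "(\<lambda>x. ereal (tail B (1 * x) / tail B x)) = (\<lambda>_. 1)"
    using tail_neq_zero[OF assms] by (simp add: fun_eq_iff)
  then show ?thesis by (simp add: Bstar_real_def Bstar_def Limsup_const)
qed

lemma Bstar_real_antimono:
  assumes "real_distr B" "inf_right_endpoint B" "1 \<le> v" "v \<le> w"
  shows "Bstar_real B w \<le> Bstar_real B v"
proof -
  have "eventually (\<lambda>x. ereal (tail B (w * x) / tail B x) \<le> ereal (tail B (v * x) / tail B x)) at_top"
    using eventually_gt_at_top[of 0]
  proof eventually_elim
    case (elim x)
    have "tail B (w * x) \<le> tail B (v * x)"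
      using assms elim by (intro tail_antimono) auto
    then show ?case using tail_pos[OF assms(2), of x] by (simp add: divide_right_mono)
  qed
  then have "Bstar B w \<le> Bstar B v"
    unfolding Bstar_def by (rule Limsup_mono)
  then show ?thesis using Bstar_eq_ereal[OF assms(1,2)] assms(3,4) by simp
qed

lemma Bstar_real_mult_le_of_less:
  assumes B: "real_distr B" "inf_right_endpoint B" and uv: "1 \<le> u" "1 \<le> v"
    and "Bstar_real B u < a" "Bstar_real B v < b"
  shows "Bstar_real B (u * v) \<le> a * b"
proof (rule Bstar_real_le[OF B])
  show "1 \<le> u * v" using mult_mono[OF uv] uv by simp
  have "eventually (\<lambda>y. tail B (u * y) / tail B y < a) at_top"
    using eventually_tail_ratio_less[OF B uv(1)] assms(5) by simp
  moreover have "filterlim (\<lambda>x. v * x) at_top at_top"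
    using uv(2) by (intro filterlim_tendsto_pos_mult_at_top[OF tendsto_const] filterlim_ident) simp
  ultimately have "eventually (\<lambda>x. tail B (u * (v * x)) / tail B (v * x) < a) at_top"
    by (rule eventually_compose_filterlim)
  then show "eventually (\<lambda>x. tail B (u * v * x) / tail B x \<le> a * b) at_top"
    using eventually_tail_ratio_less[OF B uv(2) assms(6)] eventually_gt_at_top[of 0]
  proof eventually_elim
    case (elim x)
    have "0 < v * x" using uv(2) elim(3) by simp
    have "tail B (u * v * x) / tail B x
        = tail B (u * (v * x)) / tail B (v * x) * (tail B (v * x) / tail B x)"
      using tail_neq_zero[OF B(2)] by (simp add: mult.assoc)
    also have "\<dots> \<le> a * b"
      using elim tail_ratio_bounds[OF B uv(1) \<open>0 < v * x\<close>] tail_ratio_bounds[OF B uv(2) elim(3)]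
      by (intro mult_mono) auto
    finally show ?case .
  qed
qed

lemma Bstar_real_mult_le:
  assumes "real_distr B" "inf_right_endpoint B" "1 \<le> u" "1 \<le> v"
  shows "Bstar_real B (u * v) \<le> Bstar_real B u * Bstar_real B v"
proof (rule field_le_epsilon)
  fix e :: real
  assume "0 < e"
  define \<delta> where "\<delta> = min 1 (e / 3)"
  have \<delta>: "0 < \<delta>" "\<delta> \<le> 1" "\<delta> \<le> e / 3" using \<open>0 < e\<close> by (auto simp: \<delta>_def)
  have bounds: "0 \<le> Bstar_real B u" "Bstar_real B u \<le> 1" "0 \<le> Bstar_real B v" "Bstar_real B v \<le> 1"
    using Bstar_real_bounds[OF assms(1,2,3)] Bstar_real_bounds[OF assms(1,2,4)] by auto
  have "Bstar_real B (u * v) \<le> (Bstar_real B u + \<delta>) * (Bstar_real B v + \<delta>)"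
    using \<delta>(1) by (intro Bstar_real_mult_le_of_less assms) simp_all
  also have "\<dots> = Bstar_real B u * Bstar_real B v + \<delta> * (Bstar_real B u + Bstar_real B v + \<delta>)"
    by (simp add: algebra_simps)
  also have "\<delta> * (Bstar_real B u + Bstar_real B v + \<delta>) \<le> \<delta> * 3"
    using \<delta> bounds by (intro mult_left_mono) auto
  finally show "Bstar_real B (u * v) \<le> Bstar_real B u * Bstar_real B v + e"
    using \<delta> by linarith
qed

lemma Bstar_real_power_le:
  assumes "real_distr B" "inf_right_endpoint B" "1 \<le> v"
  shows "Bstar_real B (v ^ n) \<le> Bstar_real B v ^ n"
proof (induction n)
  case 0
  then show ?case using Bstar_real_one[OF assms(2)] by simp
next
  case (Suc n)
  have "Bstar_real B (v ^ Suc n) \<le> Bstar_real B v * Bstar_real B (v ^ n)"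
    using Bstar_real_mult_le[OF assms one_le_power[OF assms(3)]] by simp
  also have "\<dots> \<le> Bstar_real B v * Bstar_real B v ^ n"
    using Suc Bstar_real_bounds[OF assms] by (intro mult_left_mono) auto
  finally show ?case by simp
qed

definition Bstar_index :: "real measure \<Rightarrow> real \<Rightarrow> ereal" where
  "Bstar_index B v = eln (Bstar B v) / ereal (ln v)"

lemma Bstar_index_eq:
  assumes "real_distr B" "inf_right_endpoint B" "1 < v"
  shows "Bstar_index B v = eln (ereal (Bstar_real B v)) / ereal (ln v)"
  unfolding Bstar_index_def using Bstar_eq_ereal[OF assms(1,2)] assms(3) by simp

lemma Bstar_index_eq_ln:
  assumes "real_distr B" "inf_right_endpoint B" "1 < v" "0 < Bstar_real B v"
  shows "Bstar_index B v = ereal (ln (Bstar_real B v) / ln v)"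
  unfolding Bstar_index_eq[OF assms(1-3)] eln_def using assms(3,4) by (simp add: ereal_divide)

lemma Bstar_index_eq_MInfty:
  assumes "real_distr B" "inf_right_endpoint B" "1 < v" "Bstar_real B v = 0"
  shows "Bstar_index B v = - \<infinity>"
  unfolding Bstar_index_eq[OF assms(1-3)] eln_def using assms(3,4) by (simp add: divide_ereal_def)

lemma Bstar_index_mono:
  assumes "real_distr B" "inf_right_endpoint B" "real_distr C" "inf_right_endpoint C" "1 < v"
    and "Bstar_real B v \<le> Bstar_real C v"
  shows "Bstar_index B v \<le> Bstar_index C v"
proof -
  have "eln (ereal (Bstar_real B v)) \<le> eln (ereal (Bstar_real C v))"
    using assms(6) unfolding eln_def by auto
  then show ?thesis
    unfolding Bstar_index_eq[OF assms(1,2,5)] Bstar_index_eq[OF assms(3,4,5)]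
    using assms(5) by (intro ereal_divide_right_mono) auto
qed

lemma Bstar_index_ge:
  assumes B: "real_distr B" "inf_right_endpoint B" and v: "1 < v" "v < v0"
    and pos: "0 < Bstar_real B v0"
  shows "ereal (ln (Bstar_real B v0) / (ln v0 - ln v)) \<le> Bstar_index B v"
proof -
  \<comment> \<open>\<open>v ^ n \<le> v0\<close>, so submultiplicativity gives
    \<open>Bstar_real B v0 \<le> Bstar_real B v ^ n\<close>.\<close>
  define b0 where "b0 = Bstar_real B v0"
  define n where "n = nat \<lfloor>ln v0 / ln v\<rfloor>"
  have ln_v: "0 < ln v" "ln v < ln v0" using v by simp_all
  have b0: "0 < b0" "b0 \<le> 1" using pos Bstar_real_bounds(2)[OF B, of v0] v by (simp_all add: b0_def)
  have "1 < ln v0 / ln v" using ln_v by simp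
  then have n: "real n \<le> ln v0 / ln v" "ln v0 / ln v - 1 < real n"
    unfolding n_def by linarith+
  have "0 < real n"
    using n(2) \<open>1 < ln v0 / ln v\<close> by linarith
  have "real n * ln v \<le> ln v0" "ln v0 - ln v \<le> real n * ln v"
    using n ln_v by (simp_all add: field_simps)
  then have "v ^ n \<le> v0"
    using v by (simp add: ln_realpow[symmetric] ln_le_cancel_iff)
  then have "b0 \<le> Bstar_real B (v ^ n)"
    unfolding b0_def using v by (intro Bstar_real_antimono B one_le_power) simp_all
  also have "\<dots> \<le> Bstar_real B v ^ n"
    using v by (intro Bstar_real_power_le B) simp
  finally have b0_le: "b0 \<le> Bstar_real B v ^ n" .
  then have bv: "0 < Bstar_real B v"
    using b0(1) Bstar_real_bounds(1)[OF B, of v] v \<open>0 < real n\<close>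
    by (cases "Bstar_real B v = 0") (simp_all add: power_0_left)
  have "ln b0 \<le> real n * ln (Bstar_real B v)"
    using b0_le b0(1) bv by (simp add: ln_realpow[symmetric])
  then have "ln b0 / (real n * ln v) \<le> ln (Bstar_real B v) / ln v"
    using \<open>0 < real n\<close> ln_v by (simp add: field_simps)
  moreover have "ln b0 / (ln v0 - ln v) \<le> ln b0 / (real n * ln v)"
    using \<open>ln v0 - ln v \<le> real n * ln v\<close> b0 ln_v \<open>0 < real n\<close>
    by (intro divide_left_mono_neg) simp_all
  ultimately show ?thesis
    unfolding Bstar_index_eq_ln[OF B v(1) bv] b0_def by simp
qed

lemma Bstar_index_le_Liminf:
  assumes B: "real_distr B" "inf_right_endpoint B" and "1 < v0"
  shows "Bstar_index B v0 \<le> Liminf (at_right 1) (Bstar_index B)"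
proof (cases "Bstar_real B v0 = 0")
  case True
  then show ?thesis using Bstar_index_eq_MInfty[OF B \<open>1 < v0\<close>] by simp
next
  case False
  then have pos: "0 < Bstar_real B v0" using Bstar_real_bounds(1)[OF B, of v0] \<open>1 < v0\<close> by simp
  define g where "g v = ereal (ln (Bstar_real B v0) / (ln v0 - ln v))" for v
  have "((\<lambda>v. ln (Bstar_real B v0) / (ln v0 - ln v)) \<longlongrightarrow> ln (Bstar_real B v0) / (ln v0 - ln 1))
      (at_right 1)"
    using \<open>1 < v0\<close> by (intro tendsto_intros) simp_all
  then have "(g \<longlongrightarrow> Bstar_index B v0) (at_right 1)"
    unfolding g_def Bstar_index_eq_ln[OF B \<open>1 < v0\<close> pos] by (simp add: lim_ereal)
  then have lim: "Liminf (at_right 1) g = Bstar_index B v0"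
    by (intro lim_imp_Liminf) simp_all
  have "eventually (\<lambda>v. g v \<le> Bstar_index B v) (at_right 1)"
  proof -
    have "eventually (\<lambda>v. 1 < v \<and> v < v0) (at_right (1::real))"
      using \<open>1 < v0\<close> by (auto simp: eventually_at_right_field intro!: exI[of _ v0])
    then show ?thesis
      by eventually_elim (simp add: g_def Bstar_index_ge[OF B _ _ pos])
  qed
  from Liminf_mono[OF this] show ?thesis
    unfolding lim .
qed

lemma Bstar_index_tendsto_Sup:
  assumes "real_distr B" "inf_right_endpoint B"
  shows "(Bstar_index B \<longlongrightarrow> (SUP v\<in>{1<..}. Bstar_index B v)) (at_right 1)"
proof -
  let ?S = "SUP v\<in>{1<..}. Bstar_index B v"
  have "Limsup (at_right 1) (Bstar_index B) \<le> ?S"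
    by (rule Limsup_bounded, rule eventually_mono[OF eventually_at_right_less])
      (auto intro: SUP_upper)
  moreover have "?S \<le> Liminf (at_right 1) (Bstar_index B)"
    using Bstar_index_le_Liminf[OF assms] by (auto intro: SUP_least)
  moreover have "Liminf (at_right 1) (Bstar_index B) \<le> Limsup (at_right 1) (Bstar_index B)"
    by (rule Liminf_le_Limsup) simp
  ultimately show ?thesis
    by (intro Liminf_eq_Limsup) (simp_all add: order_antisym)
qed

(* K_minus is defined through Lim, which says nothing before convergence is known. *)
lemma K_minus_eq_Sup:
  assumes "real_distr B" "inf_right_endpoint B"
  shows "K_minus B = - (SUP v\<in>{1<..}. Bstar_index B v)"
  unfolding K_minus_def Bstar_index_def[symmetric]
  using tendsto_Lim[OF _ Bstar_index_tendsto_Sup[OF assms]] by simp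

lemma K_minus_ge_min:
  assumes H: "real_distr H" "inf_right_endpoint H"
    and B: "real_distr B" "inf_right_endpoint B" and C: "real_distr C" "inf_right_endpoint C"
    and le: "\<And>v. 1 < v \<Longrightarrow> Bstar_real H v \<le> max (Bstar_real B v) (Bstar_real C v)"
  shows "min (K_minus B) (K_minus C) \<le> K_minus H"
proof -
  let ?S = "\<lambda>X. SUP v\<in>{1<..}. Bstar_index X v"
  have "?S H \<le> max (?S B) (?S C)"
  proof (rule SUP_least)
    fix v :: real
    assume "v \<in> {1<..}"
    then have v: "1 < v" by simp
    have "Bstar_index H v \<le> max (Bstar_index B v) (Bstar_index C v)"
    proof (cases "Bstar_real C v \<le> Bstar_real B v")
      case True
      then have "Bstar_index H v \<le> Bstar_index B v"
        using le[OF v] by (intro Bstar_index_mono[OF H B v]) simp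
      then show ?thesis by (rule max.coboundedI1)
    next
      case False
      then have "Bstar_index H v \<le> Bstar_index C v"
        using le[OF v] by (intro Bstar_index_mono[OF H C v]) simp
      then show ?thesis by (rule max.coboundedI2)
    qed
    also have "\<dots> \<le> max (?S B) (?S C)"
      using v by (intro max.mono SUP_upper) simp_all
    finally show "Bstar_index H v \<le> max (?S B) (?S C)" .
  qed
  then show ?thesis
    unfolding K_minus_eq_Sup[OF H] K_minus_eq_Sup[OF B] K_minus_eq_Sup[OF C]
    by (auto simp: min_def max_def split: if_splits)
qed

lemma Bstar_real_le_if_asymp_equiv:
  assumes H: "real_distr H" "inf_right_endpoint H"
    and equiv: "tail H \<sim>[at_top] \<phi>" and nonneg: "\<And>x. 0 \<le> \<phi> x"
    and v: "1 \<le> v" and "0 \<le> m"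
    and ratio: "\<And>\<epsilon>. 0 < \<epsilon> \<Longrightarrow> eventually (\<lambda>x. \<phi> (v * x) / \<phi> x \<le> m + \<epsilon>) at_top"
  shows "Bstar_real H v \<le> m"
proof (rule field_le_epsilon)
  fix e :: real
  assume "0 < e"
  define \<delta> where "\<delta> = min 1 (e / (m + 2))"
  have \<delta>: "0 < \<delta>" "\<delta> \<le> 1"
    using \<open>0 < e\<close> \<open>0 \<le> m\<close> by (simp_all add: \<delta>_def)
  have "\<delta> * (m + 2) \<le> e / (m + 2) * (m + 2)"
    using \<open>0 \<le> m\<close> by (intro mult_right_mono) (simp_all add: \<delta>_def)
  then have \<delta>_small: "\<delta> * (m + 2) \<le> e"
    using \<open>0 \<le> m\<close> by simp
  have "filterlim (\<lambda>x. v * x) at_top at_top"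
    using v by (intro filterlim_tendsto_pos_mult_at_top[OF tendsto_const] filterlim_ident) simp
  then have "(\<lambda>x. tail H (v * x) / tail H x) \<sim>[at_top] (\<lambda>x. \<phi> (v * x) / \<phi> x)"
    by (rule asymp_equiv_divide[OF asymp_equiv_compose'[OF equiv] equiv])
  from asymp_equiv_imp_eventually_le[OF this, of "1 + \<delta>"]
  have "eventually (\<lambda>x. tail H (v * x) / tail H x \<le> (1 + \<delta>) * (\<phi> (v * x) / \<phi> x)) at_top"
    using \<delta>(1) nonneg by (simp add: tail_nonneg)
  then have "eventually (\<lambda>x. tail H (v * x) / tail H x \<le> (1 + \<delta>) * (m + \<delta>)) at_top"
    using ratio[OF \<delta>(1)]
  proof eventually_elim
    case (elim x)
    then show ?case
      using \<delta>(1) by (simp add: order.trans[OF elim(1) mult_left_mono])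
  qed
  then have "Bstar_real H v \<le> (1 + \<delta>) * (m + \<delta>)"
    by (rule Bstar_real_le[OF H v])
  also have "\<dots> = m + \<delta> * (m + 1 + \<delta>)"
    by (simp add: algebra_simps)
  also have "\<dots> \<le> m + \<delta> * (m + 2)"
    using \<delta> by (intro add_left_mono mult_left_mono) simp_all
  also have "\<dots> \<le> m + e"
    using \<delta>_small by simp
  finally show "Bstar_real H v \<le> m + e" .
qed

lemma tail_sum_ratio_eventually_le:
  assumes B: "real_distr B" "inf_right_endpoint B" and C: "real_distr C" "inf_right_endpoint C"
    and "1 \<le> v" "0 < \<epsilon>"
  shows "eventually (\<lambda>x. (tail B (v * x) + tail C (v * x)) / (tail B x + tail C x)
           \<le> max (Bstar_real B v) (Bstar_real C v) + \<epsilon>) at_top"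
proof -
  let ?m = "max (Bstar_real B v) (Bstar_real C v) + \<epsilon>"
  have "eventually (\<lambda>x. tail B (v * x) / tail B x < ?m) at_top"
    "eventually (\<lambda>x. tail C (v * x) / tail C x < ?m) at_top"
    using assms by (intro eventually_tail_ratio_less; simp)+
  then show ?thesis
  proof eventually_elim
    case (elim x)
    have "0 < tail B x" "0 < tail C x"
      using tail_pos B(2) C(2) by auto
    with elim have "tail B (v * x) + tail C (v * x) \<le> ?m * (tail B x + tail C x)"
      by (simp add: field_simps)
    with \<open>0 < tail B x\<close> \<open>0 < tail C x\<close> show ?case
      by (simp add: divide_le_eq)
  qed
qed

lemma convolution_A_star_T_star:
  assumes F: "real_distr F" "inf_right_endpoint F" "A_star F"
    and G: "real_distr G" "inf_right_endpoint G" "T_star G"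
    and dom: "tail G \<in> O[at_top](tail F)"
  shows "(\<lambda>x. tail (F \<star> G) x) \<sim>[at_top] (\<lambda>x. tail F x + tail G x)" "A_star (F \<star> G)"
proof -
  have sub: "subexponential F" and lt_F: "long_tailed F" and lt_G: "long_tailed G"
    using F(3) G(3) by (simp_all add: A_star_def T_star_def subexponential_def)
  have lt: "long_tailed_fun (\<lambda>x. tail F x + tail G x)"
    using lt_F lt_G by (intro long_tailed_fun_add tail_nonneg)
      (simp_all add: long_tailed_iff_fun[OF F(2), symmetric] long_tailed_iff_fun[OF G(2), symmetric])
  note conv = convolution_subexponential[OF F(1,2) sub G(1) dom lt]
  show equiv: "(\<lambda>x. tail (F \<star> G) x) \<sim>[at_top] (\<lambda>x. tail F x + tail G x)"
    by (rule conv(1))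
  have H: "real_distr (F \<star> G)" "inf_right_endpoint (F \<star> G)"
    using F G by (simp_all add: real_distr_convolution inf_right_endpoint_convolution)
  have "min (K_minus F) (K_minus G) \<le> K_minus (F \<star> G)"
  proof (rule K_minus_ge_min[OF H F(1,2) G(1,2)])
    fix v :: real
    assume "1 < v"
    have "0 \<le> max (Bstar_real F v) (Bstar_real G v)"
      using Bstar_real_bounds(1)[OF F(1,2), of v] \<open>1 < v\<close> by simp
    then show "Bstar_real (F \<star> G) v \<le> max (Bstar_real F v) (Bstar_real G v)"
      using \<open>1 < v\<close> tail_sum_ratio_eventually_le[OF F(1,2) G(1,2)]
      by (intro Bstar_real_le_if_asymp_equiv[OF H equiv]) (simp_all add: add_nonneg_nonneg tail_nonneg)
  qed
  then show "A_star (F \<star> G)"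
    using F(3) G(3) conv(2) unfolding A_star_def T_star_def min_def by (auto split: if_splits)
qed

lemma convolution_A_star_smallo:
  assumes F: "real_distr F" "inf_right_endpoint F" "A_star F"
    and G: "real_distr G" "tail G \<in> o[at_top](tail F)"
  shows "(\<lambda>x. tail (F \<star> G) x) \<sim>[at_top] tail F" "A_star (F \<star> G)"
proof -
  have sub: "subexponential F" and lt_F: "long_tailed_fun (tail F)"
    using F(3) long_tailed_iff_fun[OF F(2)] by (simp_all add: A_star_def subexponential_def)
  have sum_equiv: "(\<lambda>x. tail F x + tail G x) \<sim>[at_top] tail F"
    using asymp_equiv_add_right[OF G(2)] by simp
  note conv = convolution_subexponential[OF F(1,2) sub G(1) landau_o.small_imp_big[OF G(2)]
      long_tailed_fun_asymp_equiv[OF sum_equiv lt_F]]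
  show equiv: "(\<lambda>x. tail (F \<star> G) x) \<sim>[at_top] tail F"
    by (rule asymp_equiv_trans[OF conv(1) sum_equiv])
  have H: "real_distr (F \<star> G)" "inf_right_endpoint (F \<star> G)"
    using F G by (simp_all add: real_distr_convolution inf_right_endpoint_convolution)
  have "min (K_minus F) (K_minus F) \<le> K_minus (F \<star> G)"
  proof (rule K_minus_ge_min[OF H F(1,2) F(1,2)])
    fix v :: real
    assume "1 < v"
    have "eventually (\<lambda>x. tail F (v * x) / tail F x \<le> Bstar_real F v + \<epsilon>) at_top"
      if "0 < \<epsilon>" for \<epsilon>
      using eventually_tail_ratio_less[OF F(1,2), of v "Bstar_real F v + \<epsilon>"] \<open>1 < v\<close> that
      by (auto elim: eventually_mono)
    then have "Bstar_real (F \<star> G) v \<le> Bstar_real F v"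
      using \<open>1 < v\<close> Bstar_real_bounds(1)[OF F(1,2), of v]
      by (intro Bstar_real_le_if_asymp_equiv[OF H equiv]) (simp_all add: tail_nonneg)
    then show "Bstar_real (F \<star> G) v \<le> max (Bstar_real F v) (Bstar_real F v)"
      by simp
  qed
  then show "A_star (F \<star> G)"
    using F(3) conv(2) by (auto simp: A_star_def intro: less_le_trans)
qed

theorem lemma4p2:
  fixes B1 B2 :: "real measure"
  assumes "real_distr B1" and "real_distr B2"
    and "inf_right_endpoint B1" and "inf_right_endpoint B2"
  shows "(A_star B1 \<and> T_star B2 \<and> (\<lambda>x. tail B2 x) \<in> O[at_top](\<lambda>x. tail B1 x)
            \<longrightarrow> (\<lambda>x. tail (B1 \<star> B2) x) \<sim>[at_top] (\<lambda>x. tail B1 x + tail B2 x)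
                \<and> A_star (B1 \<star> B2))
       \<and> (A_star B1 \<and> (\<lambda>x. tail B2 x) \<in> o[at_top](\<lambda>x. tail B1 x)
            \<longrightarrow> (\<lambda>x. tail (B1 \<star> B2) x) \<sim>[at_top] (\<lambda>x. tail B1 x)
                \<and> A_star (B1 \<star> B2))"
  using convolution_A_star_T_star[OF assms(1,3) _ assms(2,4)]
    convolution_A_star_smallo[OF assms(1,3) _ assms(2)]
  by blast

end
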